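(* Fix $\epsilon_2>0$ and $(u_\pm,v_\pm)$ with $v_\pm>0$ and $u_->u_++2\epsilon_2$, and let $v_*^{\epsilon_2}$ be the intermediate density of the two-shock Riemann solution (for small $\epsilon_1>0$). Then $$\lim_{\epsilon_1\to0}\sqrt{\epsilon_2^2+4\epsilon_1(v_*^{\epsilon_2}+v_-)^2}=\lim_{\epsilon_1\to0}\sqrt{\epsilon_2^2+4\epsilon_1(v_*^{\epsilon_2}+v_+)^2}=\frac{u_--u_+}{2}.$$
   Context: Perturbed Brio system: $u_t+(\tfrac12u^2+\tfrac12\epsilon_1v^2)_x=0$, $v_t+(uv-\epsilon_2v)_x=0$, $\epsilon_1,\epsilon_2>0$, $v>0$. The two-shock intermediate state $(u_*,v_* )$ satisfies $v_*>\max(v_-,v_+)$, $u_+<u_*<u_-$, $$u_*=u_-+(v_*-v_-)\frac{\epsilon_2-\sqrt{\epsilon_2^2+4\epsilon_1(v_*+v_-)^2}}{v_*+v_-},\qquad u_+=u_*+(v_+-v_* )\frac{\epsilon_2+\sqrt{\epsilon_2^2+4\epsilon_1(v_*+v_+)^2}}{v_*+v_+}.$$ *)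

theory Defs
  imports Complex_Main
begin

text \<open>Two-shock intermediate state (u_s, v_s) of the perturbed Brio system with
parameters e1, e2, connecting left state (um, vm) to right state (up, vp).\<close>
definition two_shock_state ::
  "real \<Rightarrow> real \<Rightarrow> real \<Rightarrow> real \<Rightarrow> real \<Rightarrow> real \<Rightarrow> real \<Rightarrow> real \<Rightarrow> bool" where
  "two_shock_state e1 e2 um vm up vp us vs \<longleftrightarrow>
     vs > max vm vp \<and> up < us \<and> us < um \<and>
     us = um + (vs - vm) * (e2 - sqrt (e2^2 + 4 * e1 * (vs + vm)^2)) / (vs + vm) \<and>
     up = us + (vp - vs) * (e2 + sqrt (e2^2 + 4 * e1 * (vs + vp)^2)) / (vs + vp)"

end

theory Submission
  imports Defs
begin

text \<open>Write \<open>R\<^sub>\<plusminus>\<close> for the two square roots and \<open>a\<^sub>\<plusminus> = (v\<^sub>* - v\<^sub>\<plusminus>) / (v\<^sub>* + v\<^sub>\<plusminus>) \<in> (0, 1)\<close>.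
  Adding the two shock relations gives \<open>u\<^sub>- - u\<^sub>+ = a\<^sub>-(R\<^sub>- - \<epsilon>\<^sub>2) + a\<^sub>+(R\<^sub>+ + \<epsilon>\<^sub>2)\<close>, whence
  \<open>u\<^sub>- - u\<^sub>+ \<le> R\<^sub>- + R\<^sub>+ \<le> (u\<^sub>- - u\<^sub>+)(1/a\<^sub>- + 1/a\<^sub>+ - 1)\<close>. Since \<open>R\<^sub>\<plusminus> \<le> \<epsilon>\<^sub>2 + 2\<surd>\<epsilon>\<^sub>1 (v\<^sub>* + v\<^sub>\<plusminus>)\<close>,
  the lower bound together with \<open>u\<^sub>- - u\<^sub>+ > 2\<epsilon>\<^sub>2\<close> forces \<open>v\<^sub>* \<ge> c/\<surd>\<epsilon>\<^sub>1 - C \<rightarrow> \<infinity>\<close>; hence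
  \<open>a\<^sub>\<plusminus> \<rightarrow> 1\<close> and \<open>R\<^sub>- + R\<^sub>+ \<rightarrow> u\<^sub>- - u\<^sub>+\<close>. Finally \<open>R\<^sub>\<plusminus>\<close> is the length of the vector
  \<open>(\<epsilon>\<^sub>2, 2\<surd>\<epsilon>\<^sub>1 (v\<^sub>* + v\<^sub>\<plusminus>))\<close>, so \<open>|R\<^sub>- - R\<^sub>+| \<le> 2\<surd>\<epsilon>\<^sub>1 |v\<^sub>- - v\<^sub>+| \<rightarrow> 0\<close> and each root
  tends to half the sum.\<close>

definition shock_root :: "real \<Rightarrow> real \<Rightarrow> real \<Rightarrow> real \<Rightarrow> real" where
  "shock_root e1 e2 s v = sqrt (e2\<^sup>2 + 4 * e1 * (s + v)\<^sup>2)"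

definition shock_ratio :: "real \<Rightarrow> real \<Rightarrow> real" where
  "shock_ratio s v = (s - v) / (s + v)"

lemma sqrt_sum_squares_diff_le: "\<bar>sqrt (a\<^sup>2 + x\<^sup>2) - sqrt (a\<^sup>2 + y\<^sup>2)\<bar> \<le> \<bar>x - y\<bar>"
proof -
  have "sqrt (a\<^sup>2 + x\<^sup>2) \<le> sqrt (a\<^sup>2 + y\<^sup>2) + \<bar>x - y\<bar>" for x y :: real
    using real_sqrt_sum_squares_triangle_ineq[of a 0 y "x - y"] by simp
  from this[of x y] this[of y x] show ?thesis
    by (simp add: abs_le_iff abs_minus_commute)
qed

lemma shock_root_eq_sqrt_sum_squares:
  "e1 \<ge> 0 \<Longrightarrow> shock_root e1 e2 s v = sqrt (e2\<^sup>2 + (2 * sqrt e1 * (s + v))\<^sup>2)"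
  by (simp add: shock_root_def power_mult_distrib)

lemma shock_root_diff_le:
  assumes "e1 \<ge> 0"
  shows "\<bar>shock_root e1 e2 s v - shock_root e1 e2 s w\<bar> \<le> 2 * sqrt e1 * \<bar>v - w\<bar>"
proof -
  have "2 * sqrt e1 * (s + v) - 2 * sqrt e1 * (s + w) = 2 * sqrt e1 * (v - w)"
    by (simp add: algebra_simps)
  then show ?thesis
    using sqrt_sum_squares_diff_le[of e2 "2 * sqrt e1 * (s + v)" "2 * sqrt e1 * (s + w)"]
    using assms by (simp add: shock_root_eq_sqrt_sum_squares abs_mult)
qed

lemma shock_root_le:
  "e1 \<ge> 0 \<Longrightarrow> e2 \<ge> 0 \<Longrightarrow> shock_root e1 e2 s v \<le> e2 + 2 * sqrt e1 * \<bar>s + v\<bar>"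
  using sqrt_sum_squares_diff_le[of e2 "2 * sqrt e1 * (s + v)" 0]
  by (simp add: shock_root_eq_sqrt_sum_squares abs_mult)

lemma shock_root_ge: "e1 \<ge> 0 \<Longrightarrow> e2 \<ge> 0 \<Longrightarrow> e2 \<le> shock_root e1 e2 s v"
  unfolding shock_root_def by (rule real_le_rsqrt) simp

lemma shock_ratio_bounds: "0 < v \<Longrightarrow> v < s \<Longrightarrow> 0 < shock_ratio s v \<and> shock_ratio s v < 1"
  by (simp add: shock_ratio_def divide_simps)

lemma weighted_sum_bounds:
  fixes a b x y :: real
  assumes "0 \<le> x" "0 \<le> y" "0 < a" "a \<le> 1" "0 < b" "b \<le> 1"
  shows "a * x + b * y \<le> x + y \<and> x + y \<le> (a * x + b * y) * (1 / a + 1 / b - 1)"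
proof
  show "a * x + b * y \<le> x + y"
    using assms by (intro add_mono mult_left_le_one_le) auto
  have "0 \<le> b * y * (1 / a - 1) + a * x * (1 / b - 1)"
    using assms by (intro add_nonneg_nonneg mult_nonneg_nonneg) auto
  then show "x + y \<le> (a * x + b * y) * (1 / a + 1 / b - 1)"
    using assms by (simp add: field_simps)
qed

lemma two_shock_state_jump:
  assumes "two_shock_state e1 e2 um vm up vp us s" "vm > 0" "vp > 0"
  shows "um - up = shock_ratio s vm * (shock_root e1 e2 s vm - e2)
                 + shock_ratio s vp * (shock_root e1 e2 s vp + e2)"
proof -
  have "s + vm > 0" "s + vp > 0"
    using assms unfolding two_shock_state_def by auto
  then have "um - us = shock_ratio s vm * (shock_root e1 e2 s vm - e2)"
    "us - up = shock_ratio s vp * (shock_root e1 e2 s vp + e2)"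
    using assms(1) unfolding two_shock_state_def shock_ratio_def shock_root_def
    by (simp_all add: field_simps)
  then show ?thesis by simp
qed

lemma two_shock_root_sum_bounds:
  assumes state: "two_shock_state e1 e2 um vm up vp us s"
    and "e1 \<ge> 0" "e2 \<ge> 0" "vm > 0" "vp > 0"
  shows "um - up \<le> shock_root e1 e2 s vm + shock_root e1 e2 s vp
    \<and> shock_root e1 e2 s vm + shock_root e1 e2 s vp
        \<le> (um - up) * (1 / shock_ratio s vm + 1 / shock_ratio s vp - 1)"
proof -
  have "vm < s" "vp < s"
    using state unfolding two_shock_state_def by auto
  then have "0 < shock_ratio s vm" "shock_ratio s vm \<le> 1" "0 < shock_ratio s vp" "shock_ratio s vp \<le> 1"
    using shock_ratio_bounds assms by (meson less_imp_le)+
  moreover have "0 \<le> shock_root e1 e2 s vm - e2" "0 \<le> shock_root e1 e2 s vp + e2"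
    using shock_root_ge[of e1 e2 s vm] shock_root_ge[of e1 e2 s vp] assms by linarith+
  ultimately show ?thesis
    using weighted_sum_bounds[of "shock_root e1 e2 s vm - e2" "shock_root e1 e2 s vp + e2"
        "shock_ratio s vm" "shock_ratio s vp"]
    unfolding two_shock_state_jump[OF state \<open>vm > 0\<close> \<open>vp > 0\<close>] by simp
qed

lemma two_shock_density_lower_bound:
  assumes state: "two_shock_state e1 e2 um vm up vp us s"
    and "e1 > 0" "e2 \<ge> 0" "vm > 0" "vp > 0"
  shows "(um - up - 2 * e2) / (4 * sqrt e1) - (vm + vp) / 2 \<le> s"
proof -
  have "s + vm > 0" "s + vp > 0"
    using state assms unfolding two_shock_state_def by auto
  then have "shock_root e1 e2 s vm + shock_root e1 e2 s vp \<le> 2 * e2 + 2 * sqrt e1 * (2 * s + vm + vp)"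
    using shock_root_le[of e1 e2 s vm] shock_root_le[of e1 e2 s vp] assms
    by (simp add: algebra_simps)
  moreover have "2 * sqrt e1 * (2 * s + vm + vp) = 4 * sqrt e1 * (s + (vm + vp) / 2)"
    by (simp add: algebra_simps)
  ultimately have "um - up - 2 * e2 \<le> 4 * sqrt e1 * (s + (vm + vp) / 2)"
    using two_shock_root_sum_bounds[OF state] assms by linarith
  then show ?thesis
    using assms by (simp add: divide_le_eq algebra_simps)
qed

lemma sqrt_tendsto_zero_at_right: "(sqrt \<longlongrightarrow> 0) (at_right 0)"
  using tendsto_real_sqrt[OF tendsto_ident_at[of "0::real" "{0<..}"]] by simp

lemma filterlim_inverse_sqrt_at_right: "filterlim (\<lambda>x. inverse (sqrt x)) at_top (at_right (0::real))"
proof -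
  have "filterlim sqrt (at_right 0) (at_right (0::real))"
    by (rule tendsto_imp_filterlim_at_right[OF sqrt_tendsto_zero_at_right])
      (use eventually_at_right_less[of "0::real"] in \<open>rule eventually_mono, simp\<close>)
  then show ?thesis
    using filterlim_compose[OF filterlim_inverse_at_top_right] by blast
qed

lemma shock_ratio_tendsto_one:
  assumes "filterlim s at_top F"
  shows "((\<lambda>x. shock_ratio (s x) v) \<longlongrightarrow> 1) F"
proof -
  have "filterlim (\<lambda>x. s x + v) at_infinity F"
    using filterlim_at_top_imp_at_infinity[OF filterlim_tendsto_add_at_top[OF tendsto_const assms]]
    by (simp add: add.commute)
  then have "((\<lambda>x. 2 * v / (s x + v)) \<longlongrightarrow> 0) F"
    by (rule tendsto_divide_0[OF tendsto_const])
  then have "((\<lambda>x. 1 - 2 * v / (s x + v)) \<longlongrightarrow> 1 - 0) F"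
    by (rule tendsto_diff[OF tendsto_const])
  moreover have "\<forall>\<^sub>F x in F. 1 - 2 * v / (s x + v) = shock_ratio (s x) v"
    using assms[unfolded filterlim_at_top, rule_format, of "1 - v"]
    by eventually_elim (simp add: shock_ratio_def field_simps)
  ultimately show ?thesis
    by (simp add: tendsto_cong)
qed

lemma shock_root_diff_tendsto_zero:
  "((\<lambda>e1. shock_root e1 e2 (s e1) v - shock_root e1 e2 (s e1) w) \<longlongrightarrow> 0) (at_right 0)"
proof (rule tendsto_sandwich)
  let ?B = "\<lambda>e1. 2 * sqrt e1 * \<bar>v - w\<bar>"
  have bound: "\<forall>\<^sub>F e1 in at_right 0. \<bar>shock_root e1 e2 (s e1) v - shock_root e1 e2 (s e1) w\<bar> \<le> ?B e1"
    using eventually_at_right_less[of "0::real"] by eventually_elim (simp add: shock_root_diff_le)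
  then show "\<forall>\<^sub>F e1 in at_right 0. - ?B e1 \<le> shock_root e1 e2 (s e1) v - shock_root e1 e2 (s e1) w"
    by eventually_elim (simp add: abs_le_iff)
  from bound show "\<forall>\<^sub>F e1 in at_right 0. shock_root e1 e2 (s e1) v - shock_root e1 e2 (s e1) w \<le> ?B e1"
    by eventually_elim (simp add: abs_le_iff)
  show "((\<lambda>e1. - ?B e1) \<longlongrightarrow> 0) (at_right 0)" "(?B \<longlongrightarrow> 0) (at_right 0)"
    using sqrt_tendsto_zero_at_right by (auto intro!: tendsto_eq_intros)
qed

context
  fixes e2 um vm up vp :: real and vstar :: "real \<Rightarrow> real"
  assumes e2: "e2 > 0" and vm: "vm > 0" and vp: "vp > 0" and jump: "um > up + 2 * e2"
    and states: "\<forall>\<^sub>F e1 in at_right 0. \<exists>us. two_shock_state e1 e2 um vm up vp us (vstar e1)"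
begin

lemma eventually_two_shock_state:
  "\<forall>\<^sub>F e1 in at_right 0. e1 > 0 \<and> (\<exists>us. two_shock_state e1 e2 um vm up vp us (vstar e1))"
  using eventually_conj[OF eventually_at_right_less states] by simp

lemma two_shock_density_tendsto_infinity: "filterlim vstar at_top (at_right 0)"
proof (rule filterlim_at_top_mono)
  show "filterlim (\<lambda>e1. - (vm + vp) / 2 + (um - up - 2 * e2) / 4 * inverse (sqrt e1)) at_top (at_right 0)"
    using jump by (intro filterlim_tendsto_add_at_top[OF tendsto_const]
        filterlim_tendsto_pos_mult_at_top[OF tendsto_const _ filterlim_inverse_sqrt_at_right]) auto
  show "\<forall>\<^sub>F e1 in at_right 0. - (vm + vp) / 2 + (um - up - 2 * e2) / 4 * inverse (sqrt e1) \<le> vstar e1"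
    using eventually_two_shock_state
  proof eventually_elim
    case (elim e1)
    then obtain us where "two_shock_state e1 e2 um vm up vp us (vstar e1)"
      by blast
    then have "(um - up - 2 * e2) / (4 * sqrt e1) - (vm + vp) / 2 \<le> vstar e1"
      using two_shock_density_lower_bound elim e2 vm vp by auto
    then show ?case
      by (simp add: field_simps)
  qed
qed

lemma two_shock_root_sum_tendsto:
  "((\<lambda>e1. shock_root e1 e2 (vstar e1) vm + shock_root e1 e2 (vstar e1) vp) \<longlongrightarrow> um - up) (at_right 0)"
proof (rule tendsto_sandwich)
  let ?a = "\<lambda>e1. shock_ratio (vstar e1) vm" and ?b = "\<lambda>e1. shock_ratio (vstar e1) vp"
  show "((\<lambda>e1. um - up) \<longlongrightarrow> um - up) (at_right 0)"
    by simp
  have "((\<lambda>e1. (um - up) * (1 / ?a e1 + 1 / ?b e1 - 1)) \<longlongrightarrow> (um - up) * (1 / 1 + 1 / 1 - 1)) (at_right 0)"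
    using shock_ratio_tendsto_one[OF two_shock_density_tendsto_infinity]
    by (intro tendsto_intros) auto
  then show "((\<lambda>e1. (um - up) * (1 / ?a e1 + 1 / ?b e1 - 1)) \<longlongrightarrow> um - up) (at_right 0)"
    by simp
  show "\<forall>\<^sub>F e1 in at_right 0. um - up \<le> shock_root e1 e2 (vstar e1) vm + shock_root e1 e2 (vstar e1) vp"
    "\<forall>\<^sub>F e1 in at_right 0. shock_root e1 e2 (vstar e1) vm + shock_root e1 e2 (vstar e1) vp
        \<le> (um - up) * (1 / ?a e1 + 1 / ?b e1 - 1)"
    using eventually_two_shock_state
    by (eventually_elim, use two_shock_root_sum_bounds e2 vm vp in fastforce)+
qed

end

theorem lemma6p2:
  fixes e2 um vm up vp :: real and vstar :: "real \<Rightarrow> real"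
  assumes "e2 > 0" and "vm > 0" and "vp > 0" and "um > up + 2 * e2"
    and "\<forall>\<^sub>F e1 in at_right 0. \<exists>us. two_shock_state e1 e2 um vm up vp us (vstar e1)"
  shows "((\<lambda>e1. sqrt (e2^2 + 4 * e1 * (vstar e1 + vm)^2)) \<longlongrightarrow> (um - up) / 2) (at_right 0) \<and>
     ((\<lambda>e1. sqrt (e2^2 + 4 * e1 * (vstar e1 + vp)^2)) \<longlongrightarrow> (um - up) / 2) (at_right 0)"
proof -
  let ?Rm = "\<lambda>e1. shock_root e1 e2 (vstar e1) vm" and ?Rp = "\<lambda>e1. shock_root e1 e2 (vstar e1) vp"
  have sum: "((\<lambda>e1. ?Rm e1 + ?Rp e1) \<longlongrightarrow> um - up) (at_right 0)"
    using two_shock_root_sum_tendsto[OF assms] .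
  have diff: "((\<lambda>e1. ?Rm e1 - ?Rp e1) \<longlongrightarrow> 0) (at_right 0)"
    by (rule shock_root_diff_tendsto_zero)
  have "((\<lambda>e1. ((?Rm e1 + ?Rp e1) + (?Rm e1 - ?Rp e1)) / 2) \<longlongrightarrow> (um - up + 0) / 2) (at_right 0)"
    "((\<lambda>e1. ((?Rm e1 + ?Rp e1) - (?Rm e1 - ?Rp e1)) / 2) \<longlongrightarrow> (um - up - 0) / 2) (at_right 0)"
    using sum diff by (intro tendsto_intros; simp)+
  then show ?thesis
    by (simp add: shock_root_def)
qed

end
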